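(* Let $a\in(0,1)$. There exists a constant $c>0$ such that the following holds. Let $G$ be a connected graph on vertex set $[n]$ with maximum degree $\Delta$, set $\varepsilon=n^{-a}$, let $R\sim G(n,\varepsilon/n)$, and let $G^*=G\cup R$. Then asymptotically almost surely $\iota(G^* )\ge \frac{c}{n^{a}\,\Delta^3\log n}$.
   Context: $G(n,p)$ denotes the binomial random graph on vertex set $[n]$ in which each pair is an edge independently with probability $p$. $G\cup R$ is the graph on $[n]$ whose edge set is the union of the edge sets of $G$ and $R$. For a graph $H$ on $V$ and $S\subseteq V$, $N_H(S)$ is the set of vertices in $V\setminus S$ with a neighbor in $S$, and $\iota(H)=\min\{|N_H(U)|/|U| : 0<|U|\le |V|/2\}$. Asymptotically almost surely means with probability tending to $1$ as $n\to\infty$, for an arbitrary sequence of such graphs $G=G_n$. *)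

theory Defs
  imports "HOL-Probability.Probability"
begin

definition all_pairs :: "nat \<Rightarrow> nat set set" where
  "all_pairs n = {e. \<exists>x y. e = {x, y} \<and> x \<noteq> y \<and> x \<in> {1..n} \<and> y \<in> {1..n}}"

definition is_graph_on :: "nat \<Rightarrow> nat set set \<Rightarrow> bool" where
  "is_graph_on n E \<longleftrightarrow> E \<subseteq> all_pairs n"

definition adj_rel :: "nat set set \<Rightarrow> (nat \<times> nat) set" where
  "adj_rel E = {(x, y). {x, y} \<in> E}"

definition connected_graph :: "nat \<Rightarrow> nat set set \<Rightarrow> bool" where
  "connected_graph n E \<longleftrightarrow> is_graph_on n E \<and>
     (\<forall>u\<in>{1..n}. \<forall>v\<in>{1..n}. (u, v) \<in> (adj_rel E)\<^sup>*)"

definition degree :: "nat set set \<Rightarrow> nat \<Rightarrow> nat" where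
  "degree E u = card {v. {u, v} \<in> E \<and> v \<noteq> u}"

definition max_degree :: "nat \<Rightarrow> nat set set \<Rightarrow> nat" where
  "max_degree n E = Max (degree E ` {1..n})"

definition nbhd :: "nat \<Rightarrow> nat set set \<Rightarrow> nat set \<Rightarrow> nat set" where
  "nbhd n E S = {v \<in> {1..n} - S. \<exists>u\<in>S. {u, v} \<in> E}"

definition iota :: "nat \<Rightarrow> nat set set \<Rightarrow> real" where
  "iota n E = Min {real (card (nbhd n E U)) / real (card U) | U.
                     U \<subseteq> {1..n} \<and> 0 < card U \<and> real (card U) \<le> real n / 2}"

definition gnp :: "nat \<Rightarrow> real \<Rightarrow> nat set set pmf" where
  "gnp n p = map_pmf (\<lambda>f. {e \<in> all_pairs n. f e})
               (Pi_pmf (all_pairs n) False (\<lambda>_. bernoulli_pmf p))"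

end

theory Submission
  imports Defs "HOL-Real_Asymp.Real_Asymp"
begin

text \<open>If \<open>\<iota>(G \<union> R) < \<theta> = 1/(16 n^a \<Delta>^3 log n)\<close>, some \<open>U\<close> with \<open>|U| \<le> n/2\<close> has boundary
  \<open>T = N_{G\<union>R}(U)\<close> with \<open>|T| < \<theta>|U|\<close>, and \<open>R\<close> has none of the at least \<open>|U| n/4\<close> pairs between \<open>U\<close>
  and \<open>[n] - U - T\<close>; this has probability at most \<open>exp(-n^(-a)|U|/4) \<le> n^(-3|T|) 2^(-\<Delta>|T|)\<close>.
  As \<open>N_G(U) \<subseteq> T\<close> and \<open>G\<close> is connected, \<open>U\<close> is determined by \<open>T\<close> and \<open>U \<inter> N_G(T)\<close>, which leaves
  at most \<open>2^(\<Delta>|T|)\<close> choices of \<open>U\<close> per \<open>T\<close>. The union bound over \<open>T\<close> gives failure probability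
  at most \<open>(1 + n^(-3))^n - 1 \<longrightarrow> 0\<close>, with \<open>c = 1/16\<close> for every \<open>a > 0\<close>.\<close>

lemma finite_all_pairs: "finite (all_pairs n)"
  by (rule finite_subset[of _ "Pow {1..n}"]) (auto simp: all_pairs_def)

lemma prob_gnp_avoids:
  assumes F: "F \<subseteq> all_pairs n" and p: "0 \<le> p" "p \<le> 1"
  shows "measure_pmf.prob (gnp n p) {R. R \<inter> F = {}} = (1 - p) ^ card F"
proof -
  have "measure_pmf.prob (gnp n p) {R. R \<inter> F = {}} =
     measure_pmf.prob (Pi_pmf (all_pairs n) False (\<lambda>_. bernoulli_pmf p))
       (Pi (all_pairs n) (\<lambda>e. if e \<in> F then {False} else UNIV))"
    unfolding gnp_def measure_map_pmf
    by (rule arg_cong[where f = "measure_pmf.prob _"]) (use F in \<open>auto simp: Pi_def\<close>)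
  also have "\<dots> = (\<Prod>e\<in>all_pairs n. measure_pmf.prob (bernoulli_pmf p) (if e \<in> F then {False} else UNIV))"
    by (rule measure_Pi_pmf_Pi) (rule finite_all_pairs)
  also have "\<dots> = (\<Prod>e\<in>all_pairs n. if e \<in> F then 1 - p else 1)"
    by (rule prod.cong) (use p in \<open>auto simp: measure_pmf_single\<close>)
  also have "\<dots> = (1 - p) ^ card F"
    using F finite_all_pairs by (simp add: prod.If_cases Int_absorb1)
  finally show ?thesis .
qed

definition no_edge_between :: "nat set set \<Rightarrow> nat set \<Rightarrow> nat set \<Rightarrow> bool" where
  "no_edge_between R U W \<longleftrightarrow> (\<forall>x\<in>U. \<forall>y\<in>W. {x, y} \<notin> R)"

lemma prob_gnp_no_edge_between:
  assumes "U \<subseteq> {1..n}" "W \<subseteq> {1..n}" "U \<inter> W = {}" "0 \<le> p" "p \<le> 1"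
  shows "measure_pmf.prob (gnp n p) {R. no_edge_between R U W} = (1 - p) ^ (card U * card W)"
proof -
  define F where "F = (\<lambda>(x, y). {x, y}) ` (U \<times> W)"
  have "inj_on (\<lambda>(x, y). {x, y}) (U \<times> W)"
    using assms(3) by (auto simp: inj_on_def doubleton_eq_iff)
  then have "card F = card U * card W"
    by (simp add: F_def card_image card_cartesian_product)
  moreover have "F \<subseteq> all_pairs n"
    using assms(1-3) by (fastforce simp: F_def all_pairs_def)
  moreover have "{R. no_edge_between R U W} = {R. R \<inter> F = {}}"
    by (auto simp: no_edge_between_def F_def)
  ultimately show ?thesis
    using prob_gnp_avoids assms(4,5) by metis
qed

lemma graph_edge_endpoints:
  assumes "is_graph_on n E" "{u, v} \<in> E"
  shows "u \<in> {1..n}" "v \<in> {1..n}" "u \<noteq> v"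
  using assms unfolding is_graph_on_def all_pairs_def by (auto simp: doubleton_eq_iff)

lemma connected_nbhd_nonempty:
  assumes conn: "connected_graph n E" and U: "U \<subseteq> {1..n}" "x \<in> U" "y \<in> {1..n}" "y \<notin> U"
  shows "nbhd n E U \<noteq> {}"
proof -
  have g: "is_graph_on n E" using conn by (simp add: connected_graph_def)
  have "z \<in> U \<or> nbhd n E U \<noteq> {}" if "(x, z) \<in> (adj_rel E)\<^sup>*" for z
    using that
  proof (induction rule: rtrancl_induct)
    case base
    then show ?case using U by simp
  next
    case (step w z)
    then have "{w, z} \<in> E" by (simp add: adj_rel_def)
    with step graph_edge_endpoints(2)[OF g] show ?case unfolding nbhd_def by blast
  qed
  moreover have "(x, y) \<in> (adj_rel E)\<^sup>*" using conn U by (auto simp: connected_graph_def)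
  ultimately show ?thesis using U by blast
qed

lemma card_nbhd_le_max_degree:
  assumes g: "is_graph_on n E" and T: "T \<subseteq> {1..n}"
  shows "card (nbhd n E T) \<le> max_degree n E * card T"
proof -
  let ?N = "\<lambda>t. {v. {t, v} \<in> E \<and> v \<noteq> t}"
  have finT: "finite T" using T finite_subset by blast
  have finN: "finite (?N t)" for t
    by (rule finite_subset[of _ "{1..n}"]) (use graph_edge_endpoints[OF g] in auto)
  have "card (nbhd n E T) \<le> card (\<Union>t\<in>T. ?N t)"
    by (rule card_mono) (auto simp: nbhd_def finT finN)
  also have "\<dots> \<le> (\<Sum>t\<in>T. card (?N t))"
    by (rule card_UN_le[OF finT])
  also have "\<dots> \<le> (\<Sum>t\<in>T. max_degree n E)"
    by (rule sum_mono) (use T in \<open>auto simp: max_degree_def degree_def[symmetric]\<close>)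
  finally show ?thesis by (simp add: mult.commute)
qed

definition reach :: "nat \<Rightarrow> nat set set \<Rightarrow> nat set \<Rightarrow> nat set \<Rightarrow> nat set" where
  "reach n E T A = {v \<in> {1..n} - T. \<exists>a\<in>A. (a, v) \<in> (adj_rel E \<inter> (({1..n} - T) \<times> ({1..n} - T)))\<^sup>*}"

lemma reach_subset: "reach n E T A \<subseteq> {1..n}"
  by (auto simp: reach_def)

text \<open>A set whose boundary lies in \<open>T\<close> is a union of components of \<open>G - T\<close>, and in a connected
  graph each of these components meets \<open>N(T)\<close>.\<close>

lemma eq_reach_nbhd:
  assumes conn: "connected_graph n E" and UT: "U \<subseteq> {1..n} - T" and NU: "nbhd n E U \<subseteq> T"
    and t: "t \<in> T" and T: "T \<subseteq> {1..n}"
  shows "U = reach n E T (U \<inter> nbhd n E T)"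
proof
  define S where "S = adj_rel E \<inter> (({1..n} - T) \<times> ({1..n} - T))"
  have g: "is_graph_on n E" using conn by (simp add: connected_graph_def)
  have U_closed: "y \<in> U" if "x \<in> U" "{x, y} \<in> E" "y \<notin> T" for x y
    using that NU graph_edge_endpoints(2)[OF g that(2)] unfolding nbhd_def by blast
  show "U \<subseteq> reach n E T (U \<inter> nbhd n E T)"
  proof
    fix x assume x: "x \<in> U"
    have "(x, t) \<in> (adj_rel E)\<^sup>*" using conn x UT t T by (auto simp: connected_graph_def)
    then have "x \<in> U \<Longrightarrow> \<exists>a\<in>U \<inter> nbhd n E T. (a, x) \<in> S\<^sup>*"
    proof (induction rule: converse_rtrancl_induct)
      case base
      then show ?case using t UT by auto
    next
      case (step x y)
      then have e: "{x, y} \<in> E" by (simp add: adj_rel_def)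
      show ?case
      proof (cases "y \<in> T")
        case True
        then have "x \<in> nbhd n E T" using step(4) UT e unfolding nbhd_def by (auto simp: insert_commute)
        then show ?thesis using step(4) by blast
      next
        case False
        then obtain a where "a \<in> U \<inter> nbhd n E T" "(a, y) \<in> S\<^sup>*"
          using step U_closed e by blast
        moreover have "(y, x) \<in> S"
          using e False step(4) UT U_closed[OF step(4) e False] unfolding S_def adj_rel_def
          by (auto simp: insert_commute)
        ultimately show ?thesis by (meson rtrancl_into_rtrancl)
      qed
    qed
    then show "x \<in> reach n E T (U \<inter> nbhd n E T)" using x UT unfolding reach_def S_def by auto
  qed
  show "reach n E T (U \<inter> nbhd n E T) \<subseteq> U"
  proof
    fix v assume "v \<in> reach n E T (U \<inter> nbhd n E T)"
    then obtain a where a: "a \<in> U" "(a, v) \<in> S\<^sup>*" unfolding reach_def S_def by auto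
    from a(2) show "v \<in> U"
    proof (induction rule: rtrancl_induct)
      case base
      then show ?case using a by simp
    next
      case (step y z)
      then show ?case using U_closed unfolding S_def adj_rel_def by auto
    qed
  qed
qed

lemma ln_ge_one: "3 \<le> n \<Longrightarrow> 1 \<le> ln (real n)"
  using exp_le ln_le_cancel_iff[of "exp 1" "real n"] by simp

lemma exp_le_inverse_powers:
  fixes n D k :: nat
  assumes n: "3 \<le> n" and D: "1 \<le> D"
  shows "exp (- (4 * real k * real D ^ 3 * ln (real n))) \<le> (1 / real n ^ 3) ^ k / 2 ^ (D * k)"
proof -
  define L where "L = ln (real n)"
  have L: "1 \<le> L" unfolding L_def using n by (rule ln_ge_one)
  have D3: "real D \<le> real D ^ 3" "1 \<le> real D ^ 3"
    using D power_increasing[of 1 3 "real D"] by simp_all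
  have "real D * ln 2 \<le> real D ^ 3 * L"
    using D3 L D ln_le_minus_one[of 2] by (intro mult_mono) auto
  moreover have "3 * L \<le> 3 * real D ^ 3 * L" using D3 L by simp
  ultimately have "real k * (3 * L + real D * ln 2) \<le> real k * (4 * real D ^ 3 * L)"
    by (intro mult_left_mono) auto
  then have "exp (- (4 * real k * real D ^ 3 * L)) \<le> exp (- (real k * (3 * L + real D * ln 2)))"
    by (simp add: mult.assoc)
  also have "\<dots> = 1 / (exp (real (3 * k) * L) * exp (real (D * k) * ln 2))"
  proof -
    have "real k * (3 * L + real D * ln 2) = real (3 * k) * L + real (D * k) * ln 2"
      by (simp add: algebra_simps)
    then show ?thesis by (simp only: exp_minus exp_add inverse_eq_divide)
  qed
  also have "\<dots> = (1 / real n ^ 3) ^ k / 2 ^ (D * k)"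
  proof -
    have "exp (real (3 * k) * L) = real n ^ (3 * k)" "exp (real (D * k) * ln 2) = (2::real) ^ (D * k)"
      using n by (simp_all only: exp_of_nat_mult L_def) simp_all
    then show ?thesis by (simp add: power_mult power_one_over)
  qed
  finally show ?thesis unfolding L_def .
qed

definition expansion_bound :: "real \<Rightarrow> nat \<Rightarrow> nat \<Rightarrow> real" where
  "expansion_bound a n D = (1 / 16) / (real n powr a * real D ^ 3 * ln (real n))"

lemma card_outside_two_sets_ge:
  assumes "U \<subseteq> {1..n}" "T \<subseteq> {1..n}"
  shows "real n - real (card U) - real (card T) \<le> real (card ({1..n} - U - T))"
proof -
  have "{1..n} - U - T = {1..n} - (U \<union> T)" by auto
  then have "card ({1..n} - U - T) = n - card (U \<union> T)"
    using assms finite_subset[of "U \<union> T" "{1..n}"] by (simp add: card_Diff_subset)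
  moreover have "card (U \<union> T) \<le> card U + card T" by (rule card_Un_le)
  ultimately show ?thesis by linarith
qed

lemma less_expansion_bound_imp:
  assumes n: "3 \<le> n" and a: "0 < a" and t: "1 \<le> t"
    and less: "t < expansion_bound a n D * u"
  shows "1 \<le> D" and "16 * t * (real n powr a * real D ^ 3 * ln (real n)) < u" and "16 * t < u"
proof -
  define den where "den = real n powr a * real D ^ 3 * ln (real n)"
  \<comment> \<open>For \<open>D = 0\<close> the bound degenerates to \<open>x / 0 = 0\<close>, which \<open>less\<close> excludes.\<close>
  show D: "1 \<le> D"
    using less t by (cases "D = 0") (auto simp: expansion_bound_def)
  have "1 \<le> real n powr a" using n a by (intro ge_one_powr_ge_zero) auto
  then have "1 * 1 * 1 \<le> den"
    unfolding den_def using D ln_ge_one[OF n] by (intro mult_mono) auto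
  then have den: "1 \<le> den" by simp
  have "t < (1 / 16) / den * u" using less by (simp add: expansion_bound_def den_def)
  then have "t * (16 * den) < u" using den by (simp add: pos_less_divide_eq)
  then show tu: "16 * t * den < u" by (simp add: ac_simps)
  have "16 * t \<le> 16 * t * den" using den t by simp
  with tu show "16 * t < u" by linarith
qed

lemma prob_gnp_no_edge_out_of:
  fixes a :: real and n D :: nat and U T :: "nat set"
  assumes n: "3 \<le> n" and a: "0 < a" and U: "U \<subseteq> {1..n}" and T: "T \<subseteq> {1..n}" "T \<noteq> {}"
    and u_le: "real (card U) \<le> real n / 2"
    and t_less: "real (card T) < expansion_bound a n D * real (card U)"
  shows "measure_pmf.prob (gnp n (real n powr (- a) / real n)) {R. no_edge_between R U ({1..n} - U - T)}
           \<le> (1 / real n ^ 3) ^ card T / 2 ^ (D * card T)"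
proof -
  define p where "p = real n powr (- a) / real n"
  define W where "W = {1..n} - U - T"
  define u where "u = real (card U)"
  define t where "t = real (card T)"
  have t1: "1 \<le> t" using T finite_subset[OF T(1)] by (simp add: t_def Suc_le_eq card_gt_0_iff)
  note bound = less_expansion_bound_imp[OF n a t1 t_less[folded t_def]]
  have W: "real n / 4 \<le> real (card W)"
    using card_outside_two_sets_ge[OF U T(1)] bound(3) u_le unfolding W_def t_def by linarith
  have "real n powr (- a) \<le> 1" using n a by (simp add: powr_minus inverse_le_1_iff ge_one_powr_ge_zero)
  then have p: "0 \<le> p" "p \<le> 1"
    using n by (auto simp: p_def divide_le_eq_1)
  have "measure_pmf.prob (gnp n p) {R. no_edge_between R U W} = (1 - p) ^ (card U * card W)"
    by (rule prob_gnp_no_edge_between) (use U p in \<open>auto simp: W_def\<close>)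
  also have "\<dots> \<le> exp (- p) ^ (card U * card W)"
    by (rule power_mono) (use p exp_ge_add_one_self[of "- p"] in auto)
  also have "\<dots> = exp (- (p * u * real (card W)))"
    unfolding u_def by (simp add: exp_of_nat_mult[symmetric] algebra_simps)
  also have "\<dots> \<le> exp (- (p * u * (real n / 4)))"
    using W p by (simp add: u_def mult_left_mono del: times_divide_eq_right)
  also have "p * u * (real n / 4) = real n powr (- a) * u / 4"
    using n by (simp add: p_def)
  also have "exp (- (real n powr (- a) * u / 4))
      \<le> exp (- (real n powr (- a) * (16 * t * (real n powr a * real D ^ 3 * ln (real n))) / 4))"
    using mult_left_mono[OF less_imp_le[OF bound(2)], of "real n powr (- a)"] by (simp add: u_def ac_simps)
  also have "real n powr (- a) * (16 * t * (real n powr a * real D ^ 3 * ln (real n))) / 4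
      = 4 * t * real D ^ 3 * ln (real n)"
    using n by (simp add: powr_minus field_simps)
  also have "exp (- \<dots>) \<le> (1 / real n ^ 3) ^ card T / 2 ^ (D * card T)"
    unfolding t_def by (rule exp_le_inverse_powers[OF n bound(1)])
  finally show ?thesis by (simp add: p_def W_def)
qed

lemma iota_less_imp_witness:
  assumes n: "2 \<le> n" and less: "iota n E < \<theta>"
  shows "\<exists>U. U \<subseteq> {1..n} \<and> U \<noteq> {} \<and> real (card U) \<le> real n / 2
           \<and> real (card (nbhd n E U)) < \<theta> * real (card U)"
proof -
  define C where "C = {U. U \<subseteq> {1..n} \<and> 0 < card U \<and> real (card U) \<le> real n / 2}"
  define f where "f = (\<lambda>U. real (card (nbhd n E U)) / real (card U))"
  have fin: "finite C" unfolding C_def by (rule finite_subset[of _ "Pow {1..n}"]) auto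
  have "{1} \<in> C" unfolding C_def using n by auto
  then have ne: "f ` C \<noteq> {}" by blast
  have "{real (card (nbhd n E U)) / real (card U) | U.
      U \<subseteq> {1..n} \<and> 0 < card U \<and> real (card U) \<le> real n / 2} = f ` C"
    unfolding f_def C_def by auto
  then have "Min (f ` C) < \<theta>" using less unfolding iota_def by simp
  then obtain U where U: "U \<in> C" "f U < \<theta>" using Min_less_iff[of "f ` C"] fin ne by auto
  then have "0 < card U" by (simp add: C_def)
  then have "real (card (nbhd n E U)) < \<theta> * real (card U)"
    using U(2) by (simp add: f_def pos_divide_less_eq)
  with U(1) show ?thesis unfolding C_def by (intro exI[of _ U]) auto
qed

definition sparse_cut_event :: "nat \<Rightarrow> nat set set \<Rightarrow> real \<Rightarrow> nat set \<Rightarrow> nat set \<Rightarrow> nat set set set" where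
  "sparse_cut_event n E \<theta> T A = {R. reach n E T A \<noteq> {} \<and> real (card (reach n E T A)) \<le> real n / 2
     \<and> real (card T) < \<theta> * real (card (reach n E T A))
     \<and> no_edge_between R (reach n E T A) ({1..n} - reach n E T A - T)}"

lemma low_expansion_subset_sparse_cut_events:
  assumes conn: "connected_graph n E" and n: "2 \<le> n"
  shows "{R. iota n (E \<union> R) < \<theta>}
           \<subseteq> (\<Union>(T, A)\<in>(SIGMA T:Pow {1..n} - {{}}. Pow (nbhd n E T)). sparse_cut_event n E \<theta> T A)"
proof
  fix R assume "R \<in> {R. iota n (E \<union> R) < \<theta>}"
  then have less: "iota n (E \<union> R) < \<theta>" by simp
  obtain U where U: "U \<subseteq> {1..n}" "U \<noteq> {}" "real (card U) \<le> real n / 2"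
    and small: "real (card (nbhd n (E \<union> R) U)) < \<theta> * real (card U)"
    using iota_less_imp_witness[OF n less] by blast
  define T where "T = nbhd n (E \<union> R) U"
  have T: "T \<subseteq> {1..n}" by (auto simp: T_def nbhd_def)
  have UT: "U \<subseteq> {1..n} - T" using U(1) by (auto simp: T_def nbhd_def)
  have NU: "nbhd n E U \<subseteq> T" by (auto simp: T_def nbhd_def)
  obtain x where x: "x \<in> U" using U(2) by blast
  have "\<not> {1..n} \<subseteq> U"
  proof
    assume "{1..n} \<subseteq> U"
    then have "card {1..n} \<le> card U" by (rule card_mono[OF finite_subset[OF U(1) finite_atLeastAtMost]])
    with U(3) n show False by simp
  qed
  then obtain y where y: "y \<in> {1..n}" "y \<notin> U" by blast
  obtain t where t: "t \<in> T" using connected_nbhd_nonempty[OF conn U(1) x y] NU by blast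
  have "no_edge_between R U ({1..n} - U - T)"
    by (auto simp: no_edge_between_def T_def nbhd_def)
  moreover have U_eq: "U = reach n E T (U \<inter> nbhd n E T)" by (rule eq_reach_nbhd[OF conn UT NU t T])
  moreover have "real (card T) < \<theta> * real (card U)" using small by (simp add: T_def)
  ultimately have "R \<in> sparse_cut_event n E \<theta> T (U \<inter> nbhd n E T)"
    using U unfolding sparse_cut_event_def by (simp flip: U_eq)
  then show "R \<in> (\<Union>(T, A)\<in>(SIGMA T:Pow {1..n} - {{}}. Pow (nbhd n E T)). sparse_cut_event n E \<theta> T A)"
    using T t by (intro UN_I[of "(T, U \<inter> nbhd n E T)"]) auto
qed

lemma prob_sparse_cut_event_le:
  assumes n: "3 \<le> n" and a: "0 < a" and T: "T \<subseteq> {1..n}" "T \<noteq> {}"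
  shows "measure_pmf.prob (gnp n (real n powr (- a) / real n)) (sparse_cut_event n E (expansion_bound a n D) T A)
           \<le> (1 / real n ^ 3) ^ card T / 2 ^ (D * card T)"
proof (cases "sparse_cut_event n E (expansion_bound a n D) T A = {}")
  case False
  then have cut: "reach n E T A \<noteq> {}" "real (card (reach n E T A)) \<le> real n / 2"
    "real (card T) < expansion_bound a n D * real (card (reach n E T A))"
    by (auto simp: sparse_cut_event_def)
  have "measure_pmf.prob (gnp n (real n powr (- a) / real n)) (sparse_cut_event n E (expansion_bound a n D) T A)
      \<le> measure_pmf.prob (gnp n (real n powr (- a) / real n))
          {R. no_edge_between R (reach n E T A) ({1..n} - reach n E T A - T)}"
    by (intro measure_pmf.finite_measure_mono) (auto simp: sparse_cut_event_def)
  also have "\<dots> \<le> (1 / real n ^ 3) ^ card T / 2 ^ (D * card T)"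
    using cut by (intro prob_gnp_no_edge_out_of[OF n a reach_subset T])
  finally show ?thesis .
qed simp

lemma sum_power_card_nonempty_subsets:
  fixes x :: "'a :: comm_ring_1"
  assumes "finite S"
  shows "(\<Sum>T\<in>Pow S - {{}}. x ^ card T) = (1 + x) ^ card S - 1"
proof -
  have "(\<Sum>T\<in>Pow S. x ^ card T) = (\<Prod>s\<in>S. x + 1)"
    using assms by (subst prod_add) (auto intro!: sum.cong)
  then show ?thesis using assms by (simp add: sum_diff1 add.commute)
qed

lemma prob_low_expansion_le:
  assumes conn: "connected_graph n E" and n: "3 \<le> n" and a: "0 < a"
  shows "measure_pmf.prob (gnp n (real n powr (- a) / real n))
           {R. iota n (E \<union> R) < expansion_bound a n (max_degree n E)} \<le> (1 + 1 / real n ^ 3) ^ n - 1"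
proof -
  define D where "D = max_degree n E"
  define P where "P = gnp n (real n powr (- a) / real n)"
  define X where "X = 1 / real n ^ 3"
  define Ev where "Ev = sparse_cut_event n E (expansion_bound a n D)"
  define I where "I = (SIGMA T:Pow {1..n} - {{}}. Pow (nbhd n E T))"
  have finN: "finite (nbhd n E T)" for T by (rule finite_subset[of _ "{1..n}"]) (auto simp: nbhd_def)
  have "measure_pmf.prob P {R. iota n (E \<union> R) < expansion_bound a n D}
      \<le> measure_pmf.prob P (\<Union>i\<in>I. case_prod Ev i)"
    using low_expansion_subset_sparse_cut_events[OF conn] n
    by (intro measure_pmf.finite_measure_mono) (auto simp: I_def Ev_def)
  also have "\<dots> \<le> (\<Sum>i\<in>I. measure_pmf.prob P (case_prod Ev i))"
    by (rule measure_pmf.finite_measure_subadditive_finite) (auto simp: I_def finN)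
  also have "\<dots> = (\<Sum>T\<in>Pow {1..n} - {{}}. \<Sum>A\<in>Pow (nbhd n E T). measure_pmf.prob P (Ev T A))"
    unfolding I_def by (subst sum.Sigma) (auto simp: finN case_prod_beta)
  also have "\<dots> \<le> (\<Sum>T\<in>Pow {1..n} - {{}}. X ^ card T)"
  proof (rule sum_mono)
    fix T assume T: "T \<in> Pow {1..n} - {{}}"
    have "(\<Sum>A\<in>Pow (nbhd n E T). measure_pmf.prob P (Ev T A))
        \<le> (\<Sum>A\<in>Pow (nbhd n E T). X ^ card T / 2 ^ (D * card T))"
      using T unfolding P_def Ev_def X_def by (intro sum_mono prob_sparse_cut_event_le[OF n a]) auto
    also have "\<dots> = 2 ^ card (nbhd n E T) * (X ^ card T / 2 ^ (D * card T))"
      using finN by (simp add: card_Pow)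
    also have "\<dots> \<le> 2 ^ (D * card T) * (X ^ card T / 2 ^ (D * card T))"
    proof (rule mult_right_mono)
      have "card (nbhd n E T) \<le> D * card T"
        unfolding D_def using conn T by (intro card_nbhd_le_max_degree) (auto simp: connected_graph_def)
      then show "(2::real) ^ card (nbhd n E T) \<le> 2 ^ (D * card T)" by (rule power_increasing) simp
    qed (simp add: X_def)
    finally show "(\<Sum>A\<in>Pow (nbhd n E T). measure_pmf.prob P (Ev T A)) \<le> X ^ card T" by simp
  qed
  also have "\<dots> = (1 + X) ^ n - 1" by (simp add: sum_power_card_nonempty_subsets)
  finally show ?thesis unfolding P_def X_def D_def .
qed

theorem mainTheorem2:
  fixes a :: real
  assumes "0 < a" and "a < 1"
  shows "\<exists>c>0. \<forall>G :: nat \<Rightarrow> nat set set.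
    (\<forall>n. connected_graph n (G n)) \<longrightarrow>
    ((\<lambda>n. measure_pmf.prob (gnp n (real n powr (-a) / real n))
        {R. iota n (G n \<union> R) \<ge>
            c / (real n powr a * real (max_degree n (G n)) ^ 3 * ln (real n))})
     \<longlonglongrightarrow> 1)"
proof (intro exI[of _ "1 / 16 :: real"] conjI allI impI)
  fix G :: "nat \<Rightarrow> nat set set"
  assume conn: "\<forall>n. connected_graph n (G n)"
  define P where "P n = gnp n (real n powr (- a) / real n)" for n
  define bad where "bad n = measure_pmf.prob (P n)
      {R. iota n (G n \<union> R) < expansion_bound a n (max_degree n (G n))}" for n
  have "bad \<longlonglongrightarrow> 0"
  proof (rule tendsto_sandwich)
    show "\<forall>\<^sub>F n in sequentially. 0 \<le> bad n" by (simp add: bad_def)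
    show "\<forall>\<^sub>F n in sequentially. bad n \<le> (1 + 1 / real n ^ 3) ^ n - 1"
      using prob_low_expansion_le[OF conn[rule_format] _ assms(1)]
      by (intro eventually_sequentiallyI[of 3]) (simp add: bad_def P_def)
    show "(\<lambda>n. (1 + 1 / real n ^ 3) ^ n - 1) \<longlonglongrightarrow> (0::real)" by real_asymp
  qed simp
  then have "(\<lambda>n. 1 - bad n) \<longlonglongrightarrow> 1" by (auto intro: tendsto_eq_intros)
  moreover have "1 - bad n = measure_pmf.prob (P n)
      {R. iota n (G n \<union> R) \<ge> 1 / 16 / (real n powr a * real (max_degree n (G n)) ^ 3 * ln (real n))}" for n
    unfolding bad_def expansion_bound_def
    by (subst measure_pmf.prob_compl[symmetric]) (auto intro!: arg_cong[where f = "measure_pmf.prob _"])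
  ultimately show "(\<lambda>n. measure_pmf.prob (gnp n (real n powr (- a) / real n))
        {R. iota n (G n \<union> R) \<ge> 1 / 16 / (real n powr a * real (max_degree n (G n)) ^ 3 * ln (real n))})
     \<longlonglongrightarrow> 1" unfolding P_def by simp
qed simp

end
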